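(* Let $f$ be a convex function on $[0,\infty)$ with $f(1)=1$ such that $g(x)=x^2f''(x)$ satisfies $g\ge0$ and $x^2g''(x)-g(\alpha)g(x/\alpha)\le0$ for all $x\ge0$, $\alpha>0$. Assume furthermore that $f(x)\ge c x^s$ for all $x\ge0$, for some $c>0$ and $s>1$. Then for all distributions $p_X\ll q_X$ on a finite set, $$D_{\mathrm{KL}}(p_X\|q_X)\le \frac{\log\big(1+D_{\hat f}(p_X\|q_X)\big)}{s-1},\qquad \hat f=f-1,$$ equivalently $\sum_x q_X(x) f\big(p_X(x)/q_X(x)\big)\ge e^{(s-1)D_{\mathrm{KL}}(p_X\|q_X)}$.
   Context: For distributions $p\ll q$ on a finite set and a function $h$ on $[0,\infty)$, $D_h(p\|q)=\sum_x q(x)h(p(x)/q(x))$ with $0h(0/0)=0$. $D_{\mathrm{KL}}$ is the Kullback–Leibler divergence (natural logarithm). *)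

theory Defs
  imports "HOL-Analysis.Analysis"
begin

definition is_dist :: "('a::finite \<Rightarrow> real) \<Rightarrow> bool" where
  "is_dist p \<longleftrightarrow> (\<forall>x. p x \<ge> 0) \<and> (\<Sum>x\<in>UNIV. p x) = 1"

definition abs_cont :: "('a \<Rightarrow> real) \<Rightarrow> ('a \<Rightarrow> real) \<Rightarrow> bool" where
  "abs_cont p q \<longleftrightarrow> (\<forall>x. q x = 0 \<longrightarrow> p x = 0)"

definition fdiv :: "(real \<Rightarrow> real) \<Rightarrow> ('a::finite \<Rightarrow> real) \<Rightarrow> ('a \<Rightarrow> real) \<Rightarrow> real" where
  "fdiv h p q = (\<Sum>x\<in>UNIV. if q x = 0 then 0 else q x * h (p x / q x))"

definition KL :: "('a::finite \<Rightarrow> real) \<Rightarrow> ('a \<Rightarrow> real) \<Rightarrow> real" where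
  "KL p q = (\<Sum>x\<in>UNIV. if p x = 0 then 0 else p x * ln (p x / q x))"

end

theory Submission
  imports Defs
begin

text \<open>
  A finite list of pairs \<open>(q x, p x / q x)\<close> describes the law, under \<open>q\<close>, of the likelihood
  ratio \<open>R = p / q\<close>; it has mean 1 and \<open>D\<^sub>f(p\<parallel>q) = E f(R)\<close>. The conditions on
  \<open>g = x\<^sup>2 f''\<close> make \<open>E f(R)\<close> submultiplicative under products of independent ratios
  (a concavity argument applied twice), so \<open>E f(R\<^sub>1\<cdots>R\<^sub>n) \<le> (E f(R))\<^sup>n\<close>. On the other
  hand \<open>E f(R\<^sub>1\<cdots>R\<^sub>n) \<ge> c (E R\<^sup>s)\<^sup>n\<close>, and letting \<open>n \<rightarrow> \<infinity>\<close> gives \<open>E R\<^sup>s \<le> E f(R)\<close>.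
  Jensen's inequality for \<open>exp\<close> finally gives
  \<open>E R\<^sup>s = E\<^sub>p exp((s - 1) ln R) \<ge> exp((s - 1) D\<^sub>K\<^sub>L(p\<parallel>q))\<close>.
\<close>

definition expect :: "(real \<times> real) list \<Rightarrow> (real \<Rightarrow> real) \<Rightarrow> real" where
  "expect L \<phi> = (\<Sum>(w, r)\<leftarrow>L. w * \<phi> r)"

definition ratio_law :: "real set \<Rightarrow> (real \<times> real) list \<Rightarrow> bool" where
  "ratio_law S L \<longleftrightarrow> (\<forall>(w, r)\<in>set L. 0 \<le> w \<and> r \<in> S) \<and> expect L (\<lambda>_. 1) = 1 \<and> expect L (\<lambda>r. r) = 1"

definition law_mult :: "(real \<times> real) list \<Rightarrow> (real \<times> real) list \<Rightarrow> (real \<times> real) list" where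
  "law_mult L M = [(v * w, r * t). (w, t) \<leftarrow> M, (v, r) \<leftarrow> L]"

primrec law_pow :: "(real \<times> real) list \<Rightarrow> nat \<Rightarrow> (real \<times> real) list" where
  "law_pow L 0 = [(1, 1)]"
| "law_pow L (Suc n) = law_mult (law_pow L n) L"

lemma expect_Nil [simp]: "expect [] \<phi> = 0"
  by (simp add: expect_def)

lemma expect_Cons [simp]: "expect ((w, r) # L) \<phi> = w * \<phi> r + expect L \<phi>"
  by (simp add: expect_def)

lemma expect_append [simp]: "expect (L @ M) \<phi> = expect L \<phi> + expect M \<phi>"
  by (simp add: expect_def)

lemma expect_add: "expect L (\<lambda>r. \<phi> r + \<psi> r) = expect L \<phi> + expect L \<psi>"
  by (induction L) (auto simp: algebra_simps)

lemma expect_diff: "expect L (\<lambda>r. \<phi> r - \<psi> r) = expect L \<phi> - expect L \<psi>"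
  by (induction L) (auto simp: algebra_simps)

lemma expect_cmult: "expect L (\<lambda>r. c * \<phi> r) = c * expect L \<phi>"
  by (induction L) (auto simp: algebra_simps)

lemma expect_const: "expect L (\<lambda>_. c) = c * expect L (\<lambda>_. 1)"
  using expect_cmult[of L c "\<lambda>_. 1"] by simp

lemma expect_map_ratio: "expect (map (\<lambda>(w, r). (w, h r)) L) \<phi> = expect L (\<lambda>r. \<phi> (h r))"
  by (induction L) auto

lemma expect_mono:
  assumes "\<And>w r. (w, r) \<in> set L \<Longrightarrow> 0 \<le> w" and "\<And>w r. (w, r) \<in> set L \<Longrightarrow> \<phi> r \<le> \<psi> r"
  shows "expect L \<phi> \<le> expect L \<psi>"
  unfolding expect_def using assms by (intro sum_list_mono) (auto intro: mult_left_mono)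

lemma expect_cong:
  assumes "\<And>w r. (w, r) \<in> set L \<Longrightarrow> \<phi> r = \<psi> r"
  shows "expect L \<phi> = expect L \<psi>"
  unfolding expect_def using assms by (intro arg_cong[where f = sum_list] map_cong) auto

lemma expect_nonneg:
  assumes "\<And>w r. (w, r) \<in> set L \<Longrightarrow> 0 \<le> w \<and> 0 \<le> \<phi> r"
  shows "0 \<le> expect L \<phi>"
  unfolding expect_def using assms by (intro sum_list_nonneg) auto

lemma has_real_derivative_expect:
  assumes "\<And>w r. (w, r) \<in> set L \<Longrightarrow> ((\<lambda>y. F r y) has_real_derivative F' r y) (at y)"
  shows "((\<lambda>y. expect L (\<lambda>r. F r y)) has_real_derivative expect L (\<lambda>r. F' r y)) (at y)"
  using assms
proof (induction L)
  case (Cons a L)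
  then show ?case
    by (cases a) (auto intro!: derivative_eq_intros)
qed simp

lemma expect_law_mult: "expect (law_mult L M) \<phi> = expect M (\<lambda>t. expect L (\<lambda>r. \<phi> (r * t)))"
proof (induction M)
  case (Cons a M)
  have "expect (map (\<lambda>(v, r). (v * w, r * t)) L) \<phi> = w * expect L (\<lambda>r. \<phi> (r * t))" for w t
    by (induction L) (auto simp: algebra_simps)
  with Cons show ?case
    by (cases a) (simp add: law_mult_def)
qed (simp add: law_mult_def)

lemma ratio_lawD:
  assumes "ratio_law S L" and "(w, r) \<in> set L"
  shows "0 \<le> w" and "r \<in> S"
  using assms by (auto simp: ratio_law_def)

lemma expect_affine_ratio_law:
  assumes "ratio_law S L"
  shows "expect L (\<lambda>r. a * r + b) = a + b"
  using assms by (simp add: ratio_law_def expect_add expect_cmult expect_const[of L b])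

lemma ratio_law_mult:
  assumes L: "ratio_law {0<..} L" and M: "ratio_law {0<..} M"
  shows "ratio_law {0<..} (law_mult L M)"
proof -
  have "0 \<le> u \<and> t \<in> {0<..}" if "(u, t) \<in> set (law_mult L M)" for u t
  proof -
    have "\<exists>v r w t'. (v, r) \<in> set L \<and> (w, t') \<in> set M \<and> u = v * w \<and> t = r * t'"
      using that by (auto simp: law_mult_def)
    then show ?thesis
      using ratio_lawD[OF L] ratio_lawD[OF M] by auto
  qed
  moreover have "expect L (\<lambda>r. r * t) = t" for t
    using expect_affine_ratio_law[OF L, of t 0] by (simp add: mult.commute)
  then have "expect (law_mult L M) (\<lambda>r. r) = 1"
    using M by (simp add: expect_law_mult ratio_law_def)
  ultimately show ?thesis
    using L M by (auto simp: ratio_law_def expect_law_mult)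
qed

lemma ratio_law_pow:
  assumes "ratio_law {0<..} L"
  shows "ratio_law {0<..} (law_pow L n)"
proof (induction n)
  case 0
  show ?case
    by (simp add: ratio_law_def)
qed (simp add: ratio_law_mult assms)

lemma expect_law_pow_powr:
  assumes L: "ratio_law {0<..} L"
  shows "expect (law_pow L n) (\<lambda>r. r powr s) = expect L (\<lambda>r. r powr s) ^ n"
proof (induction n)
  case (Suc n)
  have "expect (law_pow L n) (\<lambda>r. (r * t) powr s) = t powr s * expect (law_pow L n) (\<lambda>r. r powr s)"
    if "t > 0" for t
    using ratio_lawD[OF ratio_law_pow[OF L]] that
    by (subst expect_cmult[symmetric], intro expect_cong) (force simp: powr_mult)
  then have "expect (law_pow L (Suc n)) (\<lambda>r. r powr s)
      = expect L (\<lambda>t. t powr s * expect (law_pow L n) (\<lambda>r. r powr s))"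
    using ratio_lawD[OF L] by (force simp: expect_law_mult intro: expect_cong)
  with Suc show ?case
    by (simp add: mult.commute[of "_ powr s"] expect_cmult)
qed simp

lemma expect_concave_le:
  fixes h h' h'' :: "real \<Rightarrow> real"
  assumes L: "ratio_law {0<..} L"
    and h': "\<And>x. x > 0 \<Longrightarrow> (h has_real_derivative h' x) (at x)"
    and h'': "\<And>x. x > 0 \<Longrightarrow> (h' has_real_derivative h'' x) (at x)"
    and concave: "\<And>x. x > 0 \<Longrightarrow> h'' x \<le> 0"
  shows "expect L h \<le> h 1"
proof -
  have tangent: "h r \<le> h' 1 * r + (h 1 - h' 1)" if "r > 0" for r
  proof -
    have "- h' 1 * (r - 1) \<le> - h r - - h 1"
      by (rule f''_imp_f'[of "{0<..}" "\<lambda>x. - h x" "\<lambda>x. - h' x" "\<lambda>x. - h'' x"])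
        (use h' h'' concave that in \<open>auto intro!: derivative_eq_intros\<close>)
    then show ?thesis
      by (simp add: algebra_simps)
  qed
  have "expect L h \<le> expect L (\<lambda>r. h' 1 * r + (h 1 - h' 1))"
    using ratio_lawD[OF L] by (intro expect_mono tangent) auto
  then show ?thesis
    by (simp add: expect_affine_ratio_law[OF L])
qed

lemma le_of_const_mult_pow_le:
  fixes A B c :: real
  assumes "c > 0" and "0 \<le> A" and pow_le: "\<And>n. c * B ^ n \<le> A ^ n"
  shows "B \<le> A"
proof (rule ccontr)
  assume "\<not> B \<le> A"
  then have "B > 0" and "A / B < 1"
    using \<open>0 \<le> A\<close> by auto
  then obtain n where "(A / B) ^ n < c"
    using real_arch_pow_inv[OF \<open>c > 0\<close>] by blast
  then have "A ^ n < c * B ^ n"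
    using \<open>B > 0\<close> by (simp add: power_divide divide_less_eq)
  with pow_le[of n] show False
    by simp
qed

lemma ratio_law_mix_one:
  assumes L: "ratio_law {0..} L" and "0 < e" "e \<le> 1"
  shows "ratio_law {0<..} (map (\<lambda>(w, r). (w, (1 - e) * r + e)) L)"
proof -
  have "0 < (1 - e) * r + e" if "0 \<le> r" for r
    using that assms by (simp add: add_nonneg_pos)
  then show ?thesis
    using L expect_affine_ratio_law[OF L, of "1 - e" e] by (auto simp: ratio_law_def expect_map_ratio)
qed

text \<open>A bound for laws with positive ratios extends to all laws by mixing with the point mass at 1
  and letting the mixing weight tend to 0.\<close>
lemma expect_powr_le_of_pos_ratios:
  fixes f :: "real \<Rightarrow> real"
  assumes conv: "convex_on {0..} f" and f_1: "f 1 = 1" and "s \<ge> 0"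
    and pos: "\<And>M. ratio_law {0<..} M \<Longrightarrow> expect M (\<lambda>r. r powr s) \<le> expect M f"
    and L: "ratio_law {0..} L"
  shows "expect L (\<lambda>r. r powr s) \<le> expect L f"
proof -
  define A where "A = expect L f"
  define B where "B = expect L (\<lambda>r. r powr s)"
  have mixed: "(1 - e) powr s * B \<le> (1 - e) * A + e" if "0 < e" "e < 1" for e
  proof -
    have "(1 - e) powr s * B = expect L (\<lambda>r. ((1 - e) * r) powr s)"
      using ratio_lawD[OF L] that
      by (simp add: B_def flip: expect_cmult, intro expect_cong) (auto simp: powr_mult)
    also have "\<dots> \<le> expect L (\<lambda>r. ((1 - e) * r + e) powr s)"
      using ratio_lawD[OF L] that \<open>s \<ge> 0\<close> by (intro expect_mono powr_mono2) auto
    also have "\<dots> \<le> expect L (\<lambda>r. f ((1 - e) * r + e))"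
      using pos[OF ratio_law_mix_one[OF L]] that by (simp add: expect_map_ratio)
    also have "\<dots> \<le> expect L (\<lambda>r. (1 - e) * f r + e)"
    proof (rule expect_mono)
      fix w r assume "(w, r) \<in> set L"
      then show "0 \<le> w" and "f ((1 - e) * r + e) \<le> (1 - e) * f r + e"
        using ratio_lawD[OF L] convex_onD[OF conv, of e r 1] that f_1 by auto
    qed
    also have "\<dots> = (1 - e) * A + e"
      using L by (simp add: A_def expect_add expect_cmult expect_const[of L e] ratio_law_def)
    finally show ?thesis .
  qed
  have "((\<lambda>e. (1 - e) powr s * B) \<longlongrightarrow> (1 - 0) powr s * B) (at_right 0)"
    by (intro tendsto_intros) auto
  moreover have "((\<lambda>e. (1 - e) * A + e) \<longlongrightarrow> (1 - 0) * A + 0) (at_right 0)"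
    by (intro tendsto_intros)
  moreover have "\<forall>\<^sub>F e in at_right 0. (1 - e) powr s * B \<le> (1 - e) * A + e"
    using eventually_at_right_real[of 0 1] by (rule eventually_mono) (use mixed in auto)
  ultimately have "B \<le> A"
    by (intro tendsto_le[of "at_right 0"]) auto
  then show ?thesis
    by (simp add: A_def B_def)
qed

subsection \<open>Submultiplicativity\<close>

locale tensor_generator =
  fixes f f' f'' g g' g'' :: "real \<Rightarrow> real"
  assumes f_deriv: "\<And>x. x > 0 \<Longrightarrow> (f has_real_derivative f' x) (at x)"
    and f'_deriv: "\<And>x. x > 0 \<Longrightarrow> (f' has_real_derivative f'' x) (at x)"
    and g_deriv: "\<And>x. x > 0 \<Longrightarrow> (g has_real_derivative g' x) (at x)"
    and g'_deriv: "\<And>x. x > 0 \<Longrightarrow> (g' has_real_derivative g'' x) (at x)"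
    and g_eq: "\<And>x. x > 0 \<Longrightarrow> g x = x\<^sup>2 * f'' x"
    and g''_le: "\<And>x a. x > 0 \<Longrightarrow> a > 0 \<Longrightarrow> x\<^sup>2 * g'' x \<le> g a * g (x / a)"
    and f_1: "f 1 = 1"
begin

text \<open>The map \<open>r \<mapsto> g (r y) - g y f r\<close> is concave, since its second derivative times \<open>r\<^sup>2\<close>
  is \<open>(r y)\<^sup>2 g''(r y) - g y g r \<le> 0\<close>.\<close>
lemma expect_g_scaled_le:
  assumes L: "ratio_law {0<..} L" and "y > 0"
  shows "expect L (\<lambda>r. g (r * y)) \<le> g y * expect L f"
proof -
  have "expect L (\<lambda>r. g (r * y) - g y * f r) \<le> g (1 * y) - g y * f 1"
  proof (rule expect_concave_le[OF L])
    fix x :: real assume "x > 0"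
    show "((\<lambda>r. g (r * y) - g y * f r) has_real_derivative g' (x * y) * y - g y * f' x) (at x)"
      using \<open>x > 0\<close> \<open>y > 0\<close> by (auto intro!: derivative_eq_intros DERIV_chain2[OF g_deriv] f_deriv)
    show "((\<lambda>r. g' (r * y) * y - g y * f' r) has_real_derivative g'' (x * y) * y * y - g y * f'' x) (at x)"
      using \<open>x > 0\<close> \<open>y > 0\<close> by (auto intro!: derivative_eq_intros DERIV_chain2[OF g'_deriv] f'_deriv)
    have "x\<^sup>2 * (g'' (x * y) * y * y - g y * f'' x) = (x * y)\<^sup>2 * g'' (x * y) - g y * g x"
      using g_eq[OF \<open>x > 0\<close>] by (simp add: algebra_simps power2_eq_square)
    also have "\<dots> \<le> 0"
      using g''_le[of "x * y" x] \<open>x > 0\<close> \<open>y > 0\<close> by (simp add: mult.commute)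
    finally show "g'' (x * y) * y * y - g y * f'' x \<le> 0"
      using \<open>x > 0\<close> by (simp add: mult_le_0_iff)
  qed
  then show ?thesis
    by (simp add: expect_diff expect_cmult f_1)
qed

text \<open>The map \<open>y \<mapsto> E f(R y) - E f(R) f y\<close> is concave: its second derivative times \<open>y\<^sup>2\<close>
  is \<open>E g(R y) - E f(R) g y \<le> 0\<close> by the previous lemma.\<close>
lemma expect_law_mult_le:
  assumes L: "ratio_law {0<..} L" and M: "ratio_law {0<..} M"
  shows "expect (law_mult L M) f \<le> expect L f * expect M f"
proof -
  define D where "D = expect L f"
  have "expect M (\<lambda>y. expect L (\<lambda>r. f (r * y)) - D * f y) \<le> expect L (\<lambda>r. f (r * 1)) - D * f 1"
  proof (rule expect_concave_le[OF M])
    fix x :: real assume "x > 0"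
    then have pos: "r * x > 0" if "(w, r) \<in> set L" for w r
      using ratio_lawD(2)[OF L that] by simp
    show "((\<lambda>y. expect L (\<lambda>r. f (r * y)) - D * f y)
        has_real_derivative expect L (\<lambda>r. f' (r * x) * r) - D * f' x) (at x)"
      using pos \<open>x > 0\<close>
      by (auto intro!: derivative_eq_intros has_real_derivative_expect DERIV_chain2[OF f_deriv] f_deriv)
    show "((\<lambda>y. expect L (\<lambda>r. f' (r * y) * r) - D * f' y)
        has_real_derivative expect L (\<lambda>r. f'' (r * x) * r * r) - D * f'' x) (at x)"
      using pos \<open>x > 0\<close>
      by (auto intro!: derivative_eq_intros has_real_derivative_expect DERIV_chain2[OF f'_deriv] f'_deriv)
    have "x\<^sup>2 * (expect L (\<lambda>r. f'' (r * x) * r * r) - D * f'' x) = expect L (\<lambda>r. g (r * x)) - D * g x"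
      using pos g_eq \<open>x > 0\<close>
      by (simp add: right_diff_distrib flip: expect_cmult, intro arg_cong2[where f = minus] expect_cong)
        (auto simp: power2_eq_square algebra_simps)
    also have "\<dots> \<le> 0"
      using expect_g_scaled_le[OF L \<open>x > 0\<close>] by (simp add: D_def mult.commute)
    finally show "expect L (\<lambda>r. f'' (r * x) * r * r) - D * f'' x \<le> 0"
      using \<open>x > 0\<close> by (simp add: mult_le_0_iff)
  qed
  then show ?thesis
    by (simp add: D_def expect_diff expect_cmult expect_law_mult f_1)
qed

lemma expect_law_pow_le:
  assumes L: "ratio_law {0<..} L" and "0 \<le> expect L f"
  shows "expect (law_pow L n) f \<le> expect L f ^ n"
proof (induction n)
  case (Suc n)
  have "expect (law_pow L (Suc n)) f \<le> expect (law_pow L n) f * expect L f"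
    using expect_law_mult_le[OF ratio_law_pow[OF L] L] by simp
  also have "\<dots> \<le> expect L f ^ n * expect L f"
    using Suc \<open>0 \<le> expect L f\<close> by (rule mult_right_mono)
  finally show ?case
    by (simp add: mult.commute)
qed (simp add: f_1)

lemma expect_powr_le:
  assumes "c > 0" and lower: "\<And>x. x > 0 \<Longrightarrow> c * x powr s \<le> f x"
    and L: "ratio_law {0<..} L"
  shows "expect L (\<lambda>r. r powr s) \<le> expect L f"
proof (rule le_of_const_mult_pow_le[OF \<open>c > 0\<close>])
  have bound: "expect K (\<lambda>r. c * r powr s) \<le> expect K f" if "ratio_law {0<..} K" for K
    using ratio_lawD[OF that] lower by (intro expect_mono) auto
  show "0 \<le> expect L f"
    using bound[OF L] ratio_lawD[OF L] expect_nonneg[of L "\<lambda>r. c * r powr s"] \<open>c > 0\<close>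
    by fastforce
  fix n
  have "expect (law_pow L n) f \<le> expect L f ^ n"
    using expect_law_pow_le[OF L \<open>0 \<le> expect L f\<close>] .
  moreover have "c * expect L (\<lambda>r. r powr s) ^ n \<le> expect (law_pow L n) f"
    using bound[OF ratio_law_pow[OF L]] by (simp add: expect_cmult expect_law_pow_powr[OF L])
  ultimately show "c * expect L (\<lambda>r. r powr s) ^ n \<le> expect L f ^ n"
    by linarith
qed

end

lemma fdiv_eq_sum: "fdiv h p q = (\<Sum>x\<in>UNIV. q x * h (p x / q x))"
  unfolding fdiv_def by (rule sum.cong) auto

lemma fdiv_minus_const:
  assumes "is_dist q"
  shows "fdiv (\<lambda>t. h t - c) p q = fdiv h p q - c"
  using assms by (simp add: fdiv_eq_sum right_diff_distrib sum_subtractf flip: sum_distrib_right)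
    (simp add: is_dist_def)

lemma ratio_law_of_dist:
  assumes p: "is_dist p" and q: "is_dist q" and ac: "abs_cont p q"
  obtains L where "ratio_law {0..} L" and "\<And>h. expect L h = fdiv h p q"
proof -
  obtain xs where xs: "distinct xs" "set xs = (UNIV :: 'a set)"
    using finite_distinct_list[of "UNIV :: 'a set"] by auto
  define L where "L = map (\<lambda>x. (q x, p x / q x)) xs"
  have expect_L: "expect L h = fdiv h p q" for h
  proof -
    have "expect L h = (\<Sum>x\<leftarrow>xs. q x * h (p x / q x))"
      by (simp add: L_def expect_def comp_def)
    also have "\<dots> = fdiv h p q"
      by (simp add: sum_list_distinct_conv_sum_set[OF xs(1)] xs(2) fdiv_eq_sum)
    finally show ?thesis .
  qed
  have "q x * (p x / q x) = p x" for x
    using ac by (cases "q x = 0") (auto simp: abs_cont_def)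
  then have "expect L (\<lambda>r. r) = 1" and "expect L (\<lambda>_. 1) = 1"
    using p q by (simp_all add: expect_L fdiv_eq_sum is_dist_def)
  moreover have "0 \<le> w \<and> 0 \<le> r" if "(w, r) \<in> set L" for w r
    using that p q by (auto simp: L_def is_dist_def)
  ultimately have "ratio_law {0..} L"
    by (auto simp: ratio_law_def)
  then show thesis
    using that expect_L by blast
qed

lemma exp_KL_le_fdiv_powr:
  assumes p: "is_dist p" and q: "is_dist q" and ac: "abs_cont p q"
  shows "exp ((s - 1) * KL p q) \<le> fdiv (\<lambda>t. t powr s) p q"
proof -
  define y where "y x = (s - 1) * ln (p x / q x)" for x
  have "exp (\<Sum>x\<in>UNIV. p x *\<^sub>R y x) \<le> (\<Sum>x\<in>UNIV. p x * exp (y x))"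
    using p by (intro convex_on_sum[OF _ _ exp_convex]) (auto simp: is_dist_def)
  moreover have "(\<Sum>x\<in>UNIV. p x *\<^sub>R y x) = (s - 1) * KL p q"
    by (simp add: KL_def y_def sum_distrib_left) (rule sum.cong, auto)
  moreover have "p x * exp (y x) = q x * (p x / q x) powr s" for x
  proof (cases "p x = 0")
    case False
    then have "p x > 0" and "q x > 0"
      using p q ac by (auto simp: is_dist_def abs_cont_def order.order_iff_strict)
    have "(p x / q x) * exp (y x) = (p x / q x) * (p x / q x) powr (s - 1)"
      using \<open>p x > 0\<close> \<open>q x > 0\<close> by (simp add: powr_def y_def mult.commute)
    also have "\<dots> = (p x / q x) powr s"
      using \<open>p x > 0\<close> \<open>q x > 0\<close> powr_mult_base[of "p x / q x" "s - 1"] by simp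
    finally have "(p x / q x) powr s = (p x / q x) * exp (y x)" ..
    then show ?thesis
      using \<open>q x > 0\<close> by simp
  qed simp
  ultimately show ?thesis
    by (simp add: fdiv_eq_sum)
qed

theorem theorem8:
  fixes f :: "real \<Rightarrow> real" and c s :: real
    and p q :: "'a::finite \<Rightarrow> real"
  defines "g \<equiv> (\<lambda>x. x\<^sup>2 * deriv (deriv f) x)"
  assumes conv: "convex_on {0..} f"
    and f1: "f 1 = 1"
    and df: "\<forall>x>0. (f has_real_derivative deriv f x) (at x)"
    and ddf: "\<forall>x>0. (deriv f has_real_derivative deriv (deriv f) x) (at x)"
    and dg: "\<forall>x>0. (g has_real_derivative deriv g x) (at x)"
    and ddg: "\<forall>x>0. (deriv g has_real_derivative deriv (deriv g) x) (at x)"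
    and g_nonneg: "\<forall>x\<ge>0. g x \<ge> 0"
    and g_cond: "\<forall>x\<ge>0. \<forall>\<alpha>>0. x\<^sup>2 * deriv (deriv g) x - g \<alpha> * g (x / \<alpha>) \<le> 0"
    and c_pos: "c > 0" and s_gt: "s > 1"
    and lower: "\<forall>x\<ge>0. f x \<ge> c * x powr s"
    and p: "is_dist p" and q: "is_dist q" and ac: "abs_cont p q"
  shows "KL p q \<le> ln (1 + fdiv (\<lambda>t. f t - 1) p q) / (s - 1)"
proof -
  interpret tensor_generator f "deriv f" "deriv (deriv f)" g "deriv g" "deriv (deriv g)"
    using df ddf dg ddg g_cond f1 by unfold_locales (auto simp: g_def)
  have powr_le: "expect L (\<lambda>r. r powr s) \<le> expect L f" if "ratio_law {0..} L" for L
    using expect_powr_le[OF c_pos] lower s_gt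
    by (intro expect_powr_le_of_pos_ratios[OF conv f1 _ _ that]) auto
  obtain L where L: "ratio_law {0..} L" and expect_L: "\<And>h. expect L h = fdiv h p q"
    using ratio_law_of_dist[OF p q ac] by blast
  have "exp ((s - 1) * KL p q) \<le> fdiv (\<lambda>t. t powr s) p q"
    using exp_KL_le_fdiv_powr[OF p q ac] .
  also have "\<dots> \<le> 1 + fdiv (\<lambda>t. f t - 1) p q"
    using powr_le[OF L] by (simp add: expect_L fdiv_minus_const[OF q])
  finally have "(s - 1) * KL p q \<le> ln (1 + fdiv (\<lambda>t. f t - 1) p q)"
    by (subst ln_ge_iff) (auto intro: less_le_trans[OF exp_gt_zero])
  then show ?thesis
    using s_gt by (simp add: pos_le_divide_eq mult.commute)
qed

end
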